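(* For every integer $n\ge0$, \[ \sum_{m=1}^{\infty}\frac{(-1)^{m+1}(2m+2n+3)}{(m+1)(m+2n+2)}H_m=2\ln2\sum_{k=0}^{n}\frac{1}{2k+1}-\sum_{j=1}^{2n+1}\frac1j\sum_{k=1}^{j}\frac{(-1)^{k-1}}{k}. \]
   Context: $H_m=\sum_{j=1}^m 1/j$ is the $m$-th harmonic number. *)

theory Defs
  imports "HOL-Analysis.Analysis"
begin

end

theory Submission
  imports Defs "HOL-Real_Asymp.Real_Asymp"
begin

(* Write E(p) = \<Sum>_{k=1..p} (-1)^(k-1)/k for the alternating harmonic numbers and, for a fixed
   odd q (the theorem uses q = 2n+1), D(m) = E(m+q) - E(m).

   Partial fractions show that the m-th summand is (D(m+1) - D(m)) H_m, so summation by parts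
   turns the M-th partial sum into  D(M+1) H_M - \<Sum>_{m=1..M} D(m)/m.  Writing D(m) as a sum
   over t = 1..q, splitting 1/(m(m+t)) = (1/m - 1/(m+t))/t and exchanging the two finite sums
   expresses \<Sum>_{m=1..M} D(m)/m through E(M), E(M+t) and E(t) only.  As M \<rightarrow> \<infinity>,
   E(M) \<rightarrow> ln 2, while D(M+1) = O(1/M) and H_M = O(ln M) make the boundary term vanish. *)

definition alt_harm :: "nat \<Rightarrow> real" where
  "alt_harm p = (\<Sum>k=1..p. (-1) ^ (k - 1) / real k)"

lemma alt_harm_0 [simp]: "alt_harm 0 = 0"
  by (simp add: alt_harm_def)

lemma alt_harm_Suc: "alt_harm (Suc p) = alt_harm p + (-1) ^ p / real (Suc p)"
  by (simp add: alt_harm_def)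

lemma alt_harm_tendsto: "alt_harm \<longlonglongrightarrow> ln 2"
proof -
  have "alt_harm p = (\<Sum>k<p. (-1) ^ k / real (Suc k))" for p
    by (induction p) (simp_all add: alt_harm_Suc)
  then show ?thesis
    using alternating_harmonic_series_sums unfolding sums_def by presburger
qed

lemma alt_harm_shift:
  "alt_harm (p + q) - alt_harm p = (\<Sum>t=1..q. (-1) ^ (p + t - 1) / real (p + t))"
  by (induction q) (simp_all add: alt_harm_Suc add_ac)

lemma alt_harm_shift_bound: "\<bar>alt_harm (p + q) - alt_harm p\<bar> \<le> real q / (real p + 1)"
proof -
  have "\<bar>alt_harm (p + q) - alt_harm p\<bar> \<le> (\<Sum>t=1..q. \<bar>(-1) ^ (p + t - 1) / real (p + t)\<bar>)"
    unfolding alt_harm_shift by (rule sum_abs)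
  also have "\<dots> \<le> (\<Sum>t=1..q. 1 / (real p + 1))"
    by (intro sum_mono) (auto simp: power_abs divide_simps)
  finally show ?thesis by simp
qed

lemma summand_as_difference:
  assumes "odd q"
  shows "(-1) ^ (m + 1) * real (2*m + q + 2) / (real (m + 1) * real (m + q + 1))
       = (alt_harm (Suc m + q) - alt_harm (Suc m)) - (alt_harm (m + q) - alt_harm m)"
proof -
  have sign: "(-1::real) ^ (m + q) = - ((-1) ^ m)"
    using assms by (simp add: power_add)
  have "(-1) ^ (m + 1) * real (2*m + q + 2) / (real (m + 1) * real (m + q + 1))
      = (-1) ^ (m + 1) * (1 / real (m + 1) + 1 / real (m + q + 1))"
    by (simp add: field_simps)
  also have "\<dots> = (-1) ^ (m + q) / real (Suc (m + q)) - (-1) ^ m / real (Suc m)"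
    by (simp add: sign algebra_simps)
  also have "\<dots> = (alt_harm (Suc m + q) - alt_harm (Suc m)) - (alt_harm (m + q) - alt_harm m)"
    by (simp add: alt_harm_Suc)
  finally show ?thesis .
qed

lemma summation_by_parts_harm:
  fixes a :: "nat \<Rightarrow> real"
  shows "(\<Sum>m=1..M. (a (Suc m) - a m) * harm m) = a (Suc M) * harm M - (\<Sum>m=1..M. a m / real m)"
proof (induction M)
  case 0
  then show ?case by (simp add: harm_def)
next
  case (Suc M)
  have "harm (Suc M) = harm M + 1 / real (Suc M)"
    by (simp add: harm_Suc divide_inverse)
  then show ?case
    using Suc by (simp add: algebra_simps add_divide_distrib)
qed

lemma weighted_block_sum:
  "(\<Sum>m=1..M. (alt_harm (m + q) - alt_harm m) / real m)
   = (\<Sum>t=1..q. ((-1) ^ t * alt_harm M - (alt_harm (t + M) - alt_harm t)) / real t)"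
proof -
  have partial_fractions:
    "(-1) ^ (m + t - 1) / real (m + t) / real m
     = ((-1) ^ t * ((-1) ^ (m - 1) / real m) - (-1) ^ (t + m - 1) / real (t + m)) / real t"
    if "m \<in> {1..M}" "t \<in> {1..q}" for m t
  proof -
    have "m + t - 1 = t + (m - 1)"
      using that by simp
    then have sign: "(-1::real) ^ (m + t - 1) = (-1) ^ t * (-1) ^ (m - 1)"
      by (simp only: power_add)
    have "(-1) ^ (m + t - 1) / real (m + t) / real m
        = ((-1) ^ (m + t - 1) / real m - (-1) ^ (m + t - 1) / real (m + t)) / real t"
      using that by (simp add: divide_simps) (simp add: algebra_simps)
    then show ?thesis
      using sign by (simp add: add.commute[of t m])
  qed
  have "(\<Sum>m=1..M. (alt_harm (m + q) - alt_harm m) / real m)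
      = (\<Sum>m=1..M. \<Sum>t=1..q. (-1) ^ (m + t - 1) / real (m + t) / real m)"
    by (simp add: alt_harm_shift sum_divide_distrib)
  also have "\<dots> = (\<Sum>m=1..M. \<Sum>t=1..q.
      ((-1) ^ t * ((-1) ^ (m - 1) / real m) - (-1) ^ (t + m - 1) / real (t + m)) / real t)"
    by (intro sum.cong refl partial_fractions)
  also have "\<dots> = (\<Sum>t=1..q. ((-1) ^ t * (\<Sum>m=1..M. (-1) ^ (m - 1) / real m)
      - (\<Sum>m=1..M. (-1) ^ (t + m - 1) / real (t + m))) / real t)"
    by (subst sum.swap) (simp add: sum_divide_distrib[symmetric] sum_subtractf sum_distrib_left)
  also have "\<dots> = (\<Sum>t=1..q. ((-1) ^ t * alt_harm M - (alt_harm (t + M) - alt_harm t)) / real t)"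
    unfolding alt_harm_shift by (simp add: alt_harm_def)
  finally show ?thesis .
qed

lemma odd_shift_partial_sums:
  assumes "odd q"
  shows "(\<Sum>m=1..M. (-1) ^ (m + 1) * real (2*m + q + 2) / (real (m + 1) * real (m + q + 1)) * harm m)
       = (alt_harm (Suc M + q) - alt_harm (Suc M)) * harm M
         - (\<Sum>t=1..q. ((-1) ^ t * alt_harm M - (alt_harm (t + M) - alt_harm t)) / real t)"
proof -
  have "(\<Sum>m=1..M. (-1) ^ (m + 1) * real (2*m + q + 2) / (real (m + 1) * real (m + q + 1)) * harm m)
      = (\<Sum>m=1..M. ((alt_harm (Suc m + q) - alt_harm (Suc m)) - (alt_harm (m + q) - alt_harm m))
                    * harm m)"
    by (simp only: summand_as_difference[OF assms])
  also have "\<dots> = (alt_harm (Suc M + q) - alt_harm (Suc M)) * harm M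
                  - (\<Sum>m=1..M. (alt_harm (m + q) - alt_harm m) / real m)"
    by (rule summation_by_parts_harm)
  finally show ?thesis
    by (simp only: weighted_block_sum)
qed

(* The boundary term of the summation by parts vanishes: H_M = O(ln M), the block is O(1/M). *)
lemma boundary_term_tendsto_0:
  "(\<lambda>M. (alt_harm (Suc M + q) - alt_harm (Suc M)) * harm M) \<longlonglongrightarrow> 0"
proof (rule Lim_null_comparison)
  have harm_le: "harm M \<le> ln (real M) + 1" for M :: nat
  proof (cases "M = 0")
    case False
    then have "harm M - ln (real M) \<le> harm 1 - ln (real 1)"
      using euler_mascheroni_sequence_decreasing[of 1 M] by simp
    then show ?thesis by (simp add: harm_def)
  qed (simp add: harm_def)
  show "\<forall>\<^sub>F M in sequentially. norm ((alt_harm (Suc M + q) - alt_harm (Suc M)) * harm M)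
          \<le> real q / (real M + 2) * (ln (real M) + 1)"
  proof (intro always_eventually allI)
    fix M
    have "\<bar>alt_harm (Suc M + q) - alt_harm (Suc M)\<bar> \<le> real q / (real M + 2)"
      using alt_harm_shift_bound[of "Suc M" q] by (simp add: add.commute)
    then show "norm ((alt_harm (Suc M + q) - alt_harm (Suc M)) * harm M)
          \<le> real q / (real M + 2) * (ln (real M) + 1)"
      unfolding real_norm_def abs_mult abs_harm
      by (intro mult_mono harm_le) (auto intro: harm_nonneg)
  qed
  show "(\<lambda>M. real q / (real M + 2) * (ln (real M) + 1)) \<longlonglongrightarrow> 0"
    by real_asymp
qed

lemma odd_shift_series_sums:
  assumes "odd q"
  shows "(\<lambda>i. let m = i + 1 in
            (-1) ^ (m + 1) * real (2*m + q + 2) / (real (m + 1) * real (m + q + 1)) * harm m)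
         sums (ln 2 * (\<Sum>t=1..q. (1 - (-1) ^ t) / real t) - (\<Sum>t=1..q. alt_harm t / real t))"
proof -
  define f where "f m = (-1) ^ (m + 1) * real (2*m + q + 2) / (real (m + 1) * real (m + q + 1)) * harm m"
    for m
  have partial: "(\<Sum>i<M. f (i + 1)) = (\<Sum>m=1..M. f m)" for M
    by (induction M) simp_all
  have shifted: "(\<lambda>M. alt_harm (t + M)) \<longlonglongrightarrow> ln 2" for t
    using LIMSEQ_ignore_initial_segment[OF alt_harm_tendsto, of t] by (simp add: add.commute)
  have "(\<lambda>M. \<Sum>t=1..q. ((-1) ^ t * alt_harm M - (alt_harm (t + M) - alt_harm t)) / real t)
       \<longlonglongrightarrow> (\<Sum>t=1..q. ((-1) ^ t * ln 2 - (ln 2 - alt_harm t)) / real t)"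
    by (intro tendsto_intros alt_harm_tendsto shifted) auto
  then have "(\<lambda>M. \<Sum>m=1..M. f m)
       \<longlonglongrightarrow> 0 - (\<Sum>t=1..q. ((-1) ^ t * ln 2 - (ln 2 - alt_harm t)) / real t)"
    unfolding f_def odd_shift_partial_sums[OF assms]
    by (intro tendsto_diff boundary_term_tendsto_0)
  also have "0 - (\<Sum>t=1..q. ((-1) ^ t * ln 2 - (ln 2 - alt_harm t)) / real t)
       = (\<Sum>t=1..q. ln 2 * ((1 - (-1) ^ t) / real t) - alt_harm t / real t)"
    by (simp add: sum_negf[symmetric] algebra_simps diff_divide_distrib add_divide_distrib)
  also have "\<dots> = ln 2 * (\<Sum>t=1..q. (1 - (-1) ^ t) / real t) - (\<Sum>t=1..q. alt_harm t / real t)"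
    by (simp add: sum_subtractf sum_distrib_left)
  finally show ?thesis
    unfolding sums_def Let_def f_def[symmetric] partial .
qed

(* Only odd t contribute to \<Sum> (1 - (-1)^t)/t, each with weight 2. *)
lemma sum_odd_reciprocals:
  "(\<Sum>t=1..2*n+1. (1 - (-1) ^ t) / real t) = 2 * (\<Sum>k=0..n. 1 / real (2*k + 1))"
proof (induction n)
  case (Suc n)
  have "{1..2 * Suc n + 1} = insert (2*n + 3) (insert (2*n + 2) {1..2*n+1})"
    by auto
  then show ?case
    using Suc by simp
qed simp

theorem proposition7:
  fixes n :: nat
  shows "(\<lambda>i. let m = i + 1 in
            (-1) ^ (m + 1) * real (2*m + 2*n + 3) / (real (m + 1) * real (m + 2*n + 2)) * harm m)
         sums (2 * ln 2 * (\<Sum>k=0..n. 1 / real (2*k + 1))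
               - (\<Sum>j=1..2*n+1. (1 / real j) * (\<Sum>k=1..j. (-1) ^ (k - 1) / real k)))"
proof -
  have odd: "odd (2*n+1)"
    by simp
  have shift: "2*m + (2*n+1) + 2 = 2*m + 2*n + 3" "m + (2*n+1) + 1 = m + 2*n + 2" for m :: nat
    by simp_all
  have "(\<lambda>i. let m = i + 1 in
          (-1) ^ (m + 1) * real (2*m + 2*n + 3) / (real (m + 1) * real (m + 2*n + 2)) * harm m)
        sums (ln 2 * (\<Sum>t=1..2*n+1. (1 - (-1) ^ t) / real t) - (\<Sum>t=1..2*n+1. alt_harm t / real t))"
    using odd_shift_series_sums[OF odd] by (simp only: shift)
  moreover have "(\<Sum>t=1..2*n+1. alt_harm t / real t)
      = (\<Sum>j=1..2*n+1. (1 / real j) * (\<Sum>k=1..j. (-1) ^ (k - 1) / real k))"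
    by (intro sum.cong refl) (simp add: alt_harm_def)
  ultimately show ?thesis
    by (simp only: sum_odd_reciprocals mult.assoc mult.left_commute[of "ln 2"])
qed

end
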